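(* Let $\mathcal M=(N,\mathcal I)$ be a matroid, let $h\ge1$ be an integer, let $\mathcal M_h=(N,\mathcal I_h)$ be its $h$-fold union with rank function $r_h$. Let $Q\subseteq N$ and $e\in N\setminus Q$ satisfy $r_h(Q\cup\{e\})=r_h(Q)$. Then $e\in\mathrm{span}(D(Q,h))$.
   Context: The $h$-fold union $\mathcal M_h$ is the matroid on $N$ whose independent sets are the unions of $h$ independent sets of $\mathcal M$. $r$ is the rank function of $\mathcal M$, $\mathrm{span}(A)=\{f\in N: r(A\cup\{f\})=r(A)\}$, and $D(Q,\lambda)$ is the unique inclusion-wise maximal set among the maximizers of $|U|-\lambda r(U)$ over $U\subseteq Q$. *)

theory Defs
  imports Main Complex_Main
begin

definition matroid :: "'a set \<Rightarrow> 'a set set \<Rightarrow> bool" where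
  "matroid N Ind \<longleftrightarrow>
     finite N \<and> (\<forall>X\<in>Ind. X \<subseteq> N) \<and> {} \<in> Ind \<and>
     (\<forall>X Y. X \<in> Ind \<and> Y \<subseteq> X \<longrightarrow> Y \<in> Ind) \<and>
     (\<forall>X Y. X \<in> Ind \<and> Y \<in> Ind \<and> card X < card Y \<longrightarrow>
        (\<exists>y\<in>Y - X. insert y X \<in> Ind))"

definition mrank :: "'a set set \<Rightarrow> 'a set \<Rightarrow> nat" where
  "mrank Ind A = Max {card X | X. X \<subseteq> A \<and> X \<in> Ind}"

definition union_indep :: "'a set set \<Rightarrow> nat \<Rightarrow> 'a set set" where
  "union_indep Ind h = {X. \<exists>F. (\<forall>i<h. F i \<in> Ind) \<and> X = (\<Union>i<h. F i)}"

definition mspan :: "'a set \<Rightarrow> 'a set set \<Rightarrow> 'a set \<Rightarrow> 'a set" where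
  "mspan N Ind A = {f \<in> N. mrank Ind (A \<union> {f}) = mrank Ind A}"

definition Dval :: "'a set set \<Rightarrow> real \<Rightarrow> 'a set \<Rightarrow> real" where
  "Dval Ind lam U = real (card U) - lam * real (mrank Ind U)"

definition is_Dmaximizer :: "'a set set \<Rightarrow> 'a set \<Rightarrow> real \<Rightarrow> 'a set \<Rightarrow> bool" where
  "is_Dmaximizer Ind Q lam U \<longleftrightarrow> U \<subseteq> Q \<and> (\<forall>V. V \<subseteq> Q \<longrightarrow> Dval Ind lam V \<le> Dval Ind lam U)"

definition Dset :: "'a set set \<Rightarrow> 'a set \<Rightarrow> real \<Rightarrow> 'a set" where
  "Dset Ind Q lam = (THE U. is_Dmaximizer Ind Q lam U \<and>
      (\<forall>V. is_Dmaximizer Ind Q lam V \<and> U \<subseteq> V \<longrightarrow> V = U))"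

end

theory Submission
  imports Defs
begin

text \<open>
  By the matroid union theorem the rank of the h-fold union is
  r_h(X) = min over Y \<subseteq> X of |X - Y| + h r(Y). If r_h(Q \<union> {e}) = r_h(Q), a minimiser Y
  for Q \<union> {e} must contain e, as otherwise Y would give a smaller value for Q; then Z = Y - {e}
  is a minimiser for Q with r(Z \<union> {e}) = r(Z). Minimisers for Q are exactly the maximisers of
  |U| - h r(U), so Z \<subseteq> D(Q,h), and submodularity carries e \<in> span(Z) over to
  e \<in> span(D(Q,h)).

  The union theorem is proved for abstract rank functions: the min-formula for two rank functions
  is again a rank function, and its independent sets are the unions of independent sets. The
  nontrivial inclusion goes by induction on the ground set, contracting the new element in either
  function and uncrossing the two resulting witnesses by submodularity.
\<close>

section \<open>Rank functions\<close>

definition rank_function :: "'a set \<Rightarrow> ('a set \<Rightarrow> nat) \<Rightarrow> bool" where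
  "rank_function N r \<longleftrightarrow> finite N \<and> r {} = 0 \<and>
     (\<forall>A B. A \<subseteq> B \<and> B \<subseteq> N \<longrightarrow> r A \<le> r B) \<and>
     (\<forall>A x. A \<subseteq> N \<and> x \<in> N \<longrightarrow> r (insert x A) \<le> Suc (r A)) \<and>
     (\<forall>A B. A \<subseteq> N \<and> B \<subseteq> N \<longrightarrow> r (A \<union> B) + r (A \<inter> B) \<le> r A + r B)"

context
  fixes N :: "'a set" and r :: "'a set \<Rightarrow> nat"
  assumes r: "rank_function N r"
begin

lemma rank_function_finite: "finite N"
  using r by (simp add: rank_function_def)

lemma rank_function_finite_subset: "A \<subseteq> N \<Longrightarrow> finite A"
  using rank_function_finite finite_subset by blast

lemma rank_function_empty: "r {} = 0"
  using r by (simp add: rank_function_def)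

lemma rank_function_mono: "A \<subseteq> B \<Longrightarrow> B \<subseteq> N \<Longrightarrow> r A \<le> r B"
  using r by (simp add: rank_function_def)

lemma rank_function_insert_le: "A \<subseteq> N \<Longrightarrow> x \<in> N \<Longrightarrow> r (insert x A) \<le> Suc (r A)"
  using r by (simp add: rank_function_def)

lemma rank_function_submodular: "A \<subseteq> N \<Longrightarrow> B \<subseteq> N \<Longrightarrow> r (A \<union> B) + r (A \<inter> B) \<le> r A + r B"
  using r by (simp add: rank_function_def)

lemma rank_function_subset: "M \<subseteq> N \<Longrightarrow> rank_function M r"
  using r unfolding rank_function_def by (meson finite_subset subset_iff subset_trans)

lemma rank_le_card: "A \<subseteq> N \<Longrightarrow> r A \<le> card A"
proof (induction A rule: infinite_finite_induct)
  case (infinite A)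
  then show ?case using rank_function_finite_subset by blast
next
  case empty
  then show ?case by (simp add: rank_function_empty)
next
  case (insert x A)
  then show ?case using rank_function_insert_le[of A x] by simp
qed

lemma rank_eq_card_subset:
  assumes "A \<subseteq> N" "r A = card A" "B \<subseteq> A"
  shows "r B = card B"
proof -
  have "r A + r {} \<le> r B + r (A - B)"
    using rank_function_submodular[of B "A - B"] assms
    by (simp add: Un_absorb1 Int_Diff) (meson Diff_subset subset_trans)
  moreover have "card A = card B + card (A - B)"
    using assms rank_function_finite_subset by (metis card_Diff_subset card_mono le_add_diff_inverse finite_subset)
  moreover have "r (A - B) \<le> card (A - B)" "r B \<le> card B"
    using assms by (auto intro: rank_le_card)
  ultimately show ?thesis
    using assms(2) rank_function_empty by linarith
qed

lemma rank_function_basis: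
  "X \<subseteq> N \<Longrightarrow> \<exists>J\<subseteq>X. r J = card J \<and> r J = r X"
proof (induction X rule: infinite_finite_induct)
  case (infinite X)
  then show ?case using rank_function_finite_subset by blast
next
  case empty
  then show ?case using rank_function_empty by auto
next
  case (insert x X)
  obtain J where J: "J \<subseteq> X" "r J = card J" "r J = r X"
    using insert by auto
  show ?case
  proof (cases "r (insert x X) = r X")
    case True
    then show ?thesis using J by auto
  next
    case False
    have "r X \<le> r (insert x X)" "r (insert x X) \<le> Suc (r X)"
      using insert.prems rank_function_mono[of X "insert x X"] rank_function_insert_le by auto
    with False have up: "r (insert x X) = Suc (r X)" by simp
    have "r (insert x J \<union> X) + r (insert x J \<inter> X) \<le> r (insert x J) + r X"
      using J insert by (intro rank_function_submodular) auto
    moreover have "insert x J \<union> X = insert x X" "insert x J \<inter> X = J"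
      using J insert.hyps by auto
    moreover have "r (insert x J) \<le> card (insert x J)"
      using J insert by (intro rank_le_card) auto
    moreover have "card (insert x J) = Suc (card J)"
      using J insert.hyps finite_subset by (metis card_insert_disjoint in_mono)
    ultimately show ?thesis
      using up J by (intro exI[of _ "insert x J"]) auto
  qed
qed

end

definition contract :: "('a set \<Rightarrow> nat) \<Rightarrow> 'a \<Rightarrow> 'a set \<Rightarrow> nat" where
  "contract r e S = r (insert e S) - r {e}"

lemma rank_function_contract:
  assumes r: "rank_function N r" and e: "e \<in> N"
  shows "rank_function (N - {e}) (contract r e)"
proof -
  have ge: "r {e} \<le> r (insert e S)" if "S \<subseteq> N" for S
    using that e by (intro rank_function_mono[OF r]) auto
  show ?thesis
    unfolding rank_function_def contract_def
  proof (intro conjI allI impI)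
    show "finite (N - {e})" using rank_function_finite[OF r] by simp
    show "r (insert e {}) - r {e} = 0" by simp
  next
    fix A B assume "A \<subseteq> B \<and> B \<subseteq> N - {e}"
    then show "r (insert e A) - r {e} \<le> r (insert e B) - r {e}"
      using e by (intro diff_le_mono rank_function_mono[OF r]) auto
  next
    fix A x assume h: "A \<subseteq> N - {e} \<and> x \<in> N - {e}"
    have "r (insert x (insert e A)) \<le> Suc (r (insert e A))"
      using h e by (intro rank_function_insert_le[OF r]) auto
    then show "r (insert e (insert x A)) - r {e} \<le> Suc (r (insert e A) - r {e})"
      using ge[of A] h by (simp add: insert_commute)
  next
    fix A B assume h: "A \<subseteq> N - {e} \<and> B \<subseteq> N - {e}"
    have "r (insert e A \<union> insert e B) + r (insert e A \<inter> insert e B) \<le> r (insert e A) + r (insert e B)"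
      using h e by (intro rank_function_submodular[OF r]) auto
    then have "r (insert e (A \<union> B)) + r (insert e (A \<inter> B)) \<le> r (insert e A) + r (insert e B)"
      by simp
    moreover have "A \<union> B \<subseteq> N" "A \<inter> B \<subseteq> N" "A \<subseteq> N" "B \<subseteq> N" using h by auto
    ultimately show "r (insert e (A \<union> B)) - r {e} + (r (insert e (A \<inter> B)) - r {e})
        \<le> r (insert e A) - r {e} + (r (insert e B) - r {e})"
      using ge by fastforce
  qed
qed

text \<open>An independent set of the contraction lifts to an independent set of r, adding e exactly
  when e itself is independent.\<close>
lemma contract_indep_lift:
  assumes r: "rank_function N r" and e: "e \<in> N" and A: "A \<subseteq> N - {e}" and B: "B \<subseteq> N - {e}"
    and indep: "contract r e A = card A"
  shows "\<exists>A'. A' \<subseteq> insert e A \<and> r A' = card A' \<and> card (A' \<union> B) = card (A \<union> B) + r {e}"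
proof -
  have fin: "finite A" "finite B"
    using A B rank_function_finite_subset[OF r] by blast+
  have eAB: "e \<notin> A \<union> B" using A B by blast
  have "r {e} \<le> 1"
    using rank_function_insert_le[OF r, of "{}" e] e rank_function_empty[OF r] by simp
  then consider (nonloop) "r {e} = 1" | (loop) "r {e} = 0" by linarith
  then show ?thesis
  proof cases
    case nonloop
    have "r {e} \<le> r (insert e A)"
      using A e by (intro rank_function_mono[OF r]) auto
    then have "r (insert e A) = card (insert e A)"
      using indep nonloop fin eAB unfolding contract_def by auto
    then show ?thesis
      using nonloop fin eAB by (intro exI[of _ "insert e A"]) auto
  next
    case loop
    have "r (A \<union> {e}) + r (A \<inter> {e}) \<le> r A + r {e}"
      using A e by (intro rank_function_submodular[OF r]) auto
    then have "r (insert e A) \<le> r A" using loop by simp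
    moreover have "r A \<le> card A" using A by (intro rank_le_card[OF r]) auto
    ultimately have "r A = card A" using indep loop unfolding contract_def by simp
    then show ?thesis using loop by (intro exI[of _ A]) auto
  qed
qed

section \<open>Union of two rank functions\<close>

lemma union_witness_lift:
  assumes r1: "rank_function (insert e X) r1" and r2: "rank_function (insert e X) r2"
    and e: "e \<notin> X" and A: "A \<subseteq> X" and B: "B \<subseteq> X" and Y: "Y \<subseteq> X"
    and indep: "contract r1 e A = card A"
    and bound: "card (X - Y) + contract r1 e Y + r2 Y \<le> card (A \<union> B)"
  shows "\<exists>A'. A' \<subseteq> insert e X \<and> r1 A' = card A' \<and>
    card (X - Y) + r1 (insert e Y) + r2 Y \<le> card (A' \<union> B)"
proof -
  have "A \<subseteq> insert e X - {e}" "B \<subseteq> insert e X - {e}" using A B e by auto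
  from contract_indep_lift[OF r1 insertI1 this indep] obtain A' where
    A': "A' \<subseteq> insert e A" "r1 A' = card A'" "card (A' \<union> B) = card (A \<union> B) + r1 {e}"
    by blast
  have "r1 {e} \<le> r1 (insert e Y)"
    using Y by (intro rank_function_mono[OF r1]) auto
  then show ?thesis
    using A' A bound unfolding contract_def by (intro exI[of _ A']) auto
qed

text \<open>Uncrossing the two witnesses obtained by contracting e in r1 and in r2, respectively.\<close>
lemma union_bound_uncross:
  assumes r1: "rank_function (insert e X) r1" and r2: "rank_function (insert e X) r2"
    and e: "e \<notin> X" and Y: "Y \<subseteq> X" and W: "W \<subseteq> X"
  defines "f \<equiv> \<lambda>S. card (insert e X - S) + r1 S + r2 S"
  shows "f (insert e (Y \<union> W)) + f (Y \<inter> W)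
    \<le> (card (X - Y) + r1 (insert e Y) + r2 Y) + (card (X - W) + r1 W + r2 (insert e W)) + 1"
proof -
  have fin: "finite X" using rank_function_finite[OF r1] by simp
  have "card (X - Y) + card (X - W) = card ((X - Y) \<union> (X - W)) + card ((X - Y) \<inter> (X - W))"
    using fin by (intro card_Un_Int) auto
  moreover have "(X - Y) \<union> (X - W) = X - Y \<inter> W" "(X - Y) \<inter> (X - W) = X - (Y \<union> W)" by auto
  moreover have "insert e X - insert e (Y \<union> W) = X - (Y \<union> W)" using e by auto
  moreover have "card (insert e X - Y \<inter> W) = Suc (card (X - Y \<inter> W))"
    using e Y fin by (subst insert_Diff_if) auto
  ultimately have card: "card (insert e X - insert e (Y \<union> W)) + card (insert e X - Y \<inter> W)
      = card (X - Y) + card (X - W) + 1"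
    by simp
  have "r1 (insert e Y \<union> W) + r1 (insert e Y \<inter> W) \<le> r1 (insert e Y) + r1 W"
    using Y W by (intro rank_function_submodular[OF r1]) auto
  moreover have "r2 (Y \<union> insert e W) + r2 (Y \<inter> insert e W) \<le> r2 Y + r2 (insert e W)"
    using Y W by (intro rank_function_submodular[OF r2]) auto
  moreover have "insert e Y \<union> W = insert e (Y \<union> W)" "insert e Y \<inter> W = Y \<inter> W"
    "Y \<union> insert e W = insert e (Y \<union> W)" "Y \<inter> insert e W = Y \<inter> W"
    using e Y W by auto
  ultimately show ?thesis
    using card unfolding f_def by simp
qed

text \<open>The hard half of the matroid union theorem for two rank functions.\<close>
lemma union_witness:
  assumes "finite X" "rank_function X r1" "rank_function X r2"
  shows "\<exists>A B Y. A \<subseteq> X \<and> B \<subseteq> X \<and> Y \<subseteq> X \<and> r1 A = card A \<and> r2 B = card B \<and>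
    card (X - Y) + r1 Y + r2 Y \<le> card (A \<union> B)"
  using assms
proof (induction X arbitrary: r1 r2 rule: finite_induct)
  case empty
  then show ?case using rank_function_empty by (intro exI[of _ "{}"]) auto
next
  case (insert e X)
  have X: "insert e X - {e} = X" using insert.hyps by simp
  have r1: "rank_function X r1" "rank_function X (contract r1 e)"
    using rank_function_subset[OF insert.prems(1)] rank_function_contract[OF insert.prems(1) insertI1]
    unfolding X by auto
  have r2: "rank_function X r2" "rank_function X (contract r2 e)"
    using rank_function_subset[OF insert.prems(2)] rank_function_contract[OF insert.prems(2) insertI1]
    unfolding X by auto
  obtain A1 B1 Y where "A1 \<subseteq> X" "B1 \<subseteq> X" "Y \<subseteq> X" "contract r1 e A1 = card A1" "r2 B1 = card B1"
      "card (X - Y) + contract r1 e Y + r2 Y \<le> card (A1 \<union> B1)"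
    using insert.IH[OF r1(2) r2(1)] by blast
  moreover from union_witness_lift[OF insert.prems insert.hyps(2) this(1-4,6)] obtain A1' where
    "A1' \<subseteq> insert e X" "r1 A1' = card A1'"
    "card (X - Y) + r1 (insert e Y) + r2 Y \<le> card (A1' \<union> B1)"
    by blast
  ultimately have w1: "A1' \<subseteq> insert e X" "B1 \<subseteq> insert e X" "r1 A1' = card A1'" "r2 B1 = card B1"
    "Y \<subseteq> X" "card (X - Y) + r1 (insert e Y) + r2 Y \<le> card (A1' \<union> B1)"
    by auto
  obtain A2 B2 W where "B2 \<subseteq> X" "A2 \<subseteq> X" "W \<subseteq> X" "contract r2 e B2 = card B2" "r1 A2 = card A2"
      "card (X - W) + contract r2 e W + r1 W \<le> card (B2 \<union> A2)"
    using insert.IH[OF r1(1) r2(2)] by (auto simp: Un_commute add.commute add.left_commute)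
  moreover from union_witness_lift[OF insert.prems(2,1) insert.hyps(2) this(1-4,6)] obtain B2' where
    "B2' \<subseteq> insert e X" "r2 B2' = card B2'"
    "card (X - W) + r2 (insert e W) + r1 W \<le> card (B2' \<union> A2)"
    by blast
  ultimately have w2: "A2 \<subseteq> insert e X" "B2' \<subseteq> insert e X" "r1 A2 = card A2" "r2 B2' = card B2'"
    "W \<subseteq> X" "card (X - W) + r1 W + r2 (insert e W) \<le> card (A2 \<union> B2')"
    by (auto simp: Un_commute add.commute add.left_commute)
  define f where "f S = card (insert e X - S) + r1 S + r2 S" for S
  have "f (insert e (Y \<union> W)) + f (Y \<inter> W)
      \<le> (card (X - Y) + r1 (insert e Y) + r2 Y) + (card (X - W) + r1 W + r2 (insert e W)) + 1"
    unfolding f_def using union_bound_uncross[OF insert.prems insert.hyps(2) w1(5) w2(5)] .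
  then have "\<exists>S\<in>{insert e (Y \<union> W), Y \<inter> W}. f S \<le> card (A1' \<union> B1) \<or> f S \<le> card (A2 \<union> B2')"
    using w1(6) w2(6) by auto
  moreover have "{insert e (Y \<union> W), Y \<inter> W} \<subseteq> Pow (insert e X)"
    using w1(5) w2(5) by auto
  ultimately show ?case
    using w1(1-4) w2(1-4) unfolding f_def by blast
qed

definition union_rank :: "('a set \<Rightarrow> nat) \<Rightarrow> ('a set \<Rightarrow> nat) \<Rightarrow> 'a set \<Rightarrow> nat" where
  "union_rank r1 r2 X = Min ((\<lambda>Y. card (X - Y) + r1 Y + r2 Y) ` Pow X)"

lemma union_rank_le: "finite X \<Longrightarrow> Y \<subseteq> X \<Longrightarrow> union_rank r1 r2 X \<le> card (X - Y) + r1 Y + r2 Y"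
  unfolding union_rank_def by (intro Min_le) auto

lemma union_rank_attained:
  assumes "finite X"
  shows "\<exists>Y\<subseteq>X. union_rank r1 r2 X = card (X - Y) + r1 Y + r2 Y"
proof -
  have "union_rank r1 r2 X \<in> (\<lambda>Y. card (X - Y) + r1 Y + r2 Y) ` Pow X"
    unfolding union_rank_def using assms by (intro Min_in) auto
  then show ?thesis by auto
qed

context
  fixes N :: "'a set" and r1 r2 :: "'a set \<Rightarrow> nat"
  assumes r1: "rank_function N r1" and r2: "rank_function N r2"
begin

lemma union_rank_mono:
  assumes "A \<subseteq> B" "B \<subseteq> N"
  shows "union_rank r1 r2 A \<le> union_rank r1 r2 B"
proof -
  have fin: "finite A" "finite B"
    using assms rank_function_finite_subset[OF r1] by auto
  obtain Y where Y: "Y \<subseteq> B" "union_rank r1 r2 B = card (B - Y) + r1 Y + r2 Y"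
    using union_rank_attained[OF fin(2)] by blast
  have "union_rank r1 r2 A \<le> card (A - Y \<inter> A) + r1 (Y \<inter> A) + r2 (Y \<inter> A)"
    using fin by (intro union_rank_le) auto
  moreover have "card (A - Y \<inter> A) \<le> card (B - Y)"
    using fin assms by (intro card_mono) auto
  moreover have "r1 (Y \<inter> A) \<le> r1 Y" "r2 (Y \<inter> A) \<le> r2 Y"
    using Y assms rank_function_mono[OF r1, of "Y \<inter> A" Y] rank_function_mono[OF r2, of "Y \<inter> A" Y]
    by auto
  ultimately show ?thesis
    using Y by linarith
qed

lemma union_rank_insert_le:
  assumes "A \<subseteq> N"
  shows "union_rank r1 r2 (insert x A) \<le> Suc (union_rank r1 r2 A)"
proof -
  have fin: "finite A"
    using assms rank_function_finite_subset[OF r1] by auto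
  obtain Y where Y: "Y \<subseteq> A" "union_rank r1 r2 A = card (A - Y) + r1 Y + r2 Y"
    using union_rank_attained[OF fin] by blast
  have "union_rank r1 r2 (insert x A) \<le> card (insert x A - Y) + r1 Y + r2 Y"
    using fin Y by (intro union_rank_le) auto
  moreover have "card (insert x A - Y) \<le> card (insert x (A - Y))"
    using fin by (intro card_mono) auto
  moreover have "card (insert x (A - Y)) \<le> Suc (card (A - Y))"
    using fin by (simp add: card_insert_if)
  ultimately show ?thesis
    using Y by linarith
qed

lemma union_rank_submodular:
  assumes "A \<subseteq> N" "B \<subseteq> N"
  shows "union_rank r1 r2 (A \<union> B) + union_rank r1 r2 (A \<inter> B) \<le> union_rank r1 r2 A + union_rank r1 r2 B"
proof -
  have fin: "finite A" "finite B"
    using assms rank_function_finite_subset[OF r1] by auto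
  obtain Y1 where Y1: "Y1 \<subseteq> A" "union_rank r1 r2 A = card (A - Y1) + r1 Y1 + r2 Y1"
    using union_rank_attained[OF fin(1)] by blast
  obtain Y2 where Y2: "Y2 \<subseteq> B" "union_rank r1 r2 B = card (B - Y2) + r1 Y2 + r2 Y2"
    using union_rank_attained[OF fin(2)] by blast
  have "union_rank r1 r2 (A \<union> B) \<le> card ((A \<union> B) - (Y1 \<union> Y2)) + r1 (Y1 \<union> Y2) + r2 (Y1 \<union> Y2)"
    using fin Y1 Y2 by (intro union_rank_le) auto
  moreover have "union_rank r1 r2 (A \<inter> B) \<le> card ((A \<inter> B) - (Y1 \<inter> Y2)) + r1 (Y1 \<inter> Y2) + r2 (Y1 \<inter> Y2)"
    using fin Y1 Y2 by (intro union_rank_le) auto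
  moreover have "card ((A \<union> B) - (Y1 \<union> Y2)) + card ((A \<inter> B) - (Y1 \<inter> Y2))
      \<le> card (A - Y1) + card (B - Y2)"
  proof -
    let ?T1 = "(A \<union> B) - (Y1 \<union> Y2)" and ?T2 = "(A \<inter> B) - (Y1 \<inter> Y2)"
    have "card ?T1 + card ?T2 = card (?T1 \<union> ?T2) + card (?T1 \<inter> ?T2)"
      using fin by (intro card_Un_Int) auto
    also have "\<dots> \<le> card ((A - Y1) \<union> (B - Y2)) + card ((A - Y1) \<inter> (B - Y2))"
      using fin Y1 Y2 by (intro add_mono card_mono) auto
    also have "\<dots> = card (A - Y1) + card (B - Y2)"
      using fin by (intro card_Un_Int[symmetric]) auto
    finally show ?thesis .
  qed
  moreover have "r1 (Y1 \<union> Y2) + r1 (Y1 \<inter> Y2) \<le> r1 Y1 + r1 Y2" "r2 (Y1 \<union> Y2) + r2 (Y1 \<inter> Y2) \<le> r2 Y1 + r2 Y2"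
    using Y1 Y2 assms rank_function_submodular[OF r1, of Y1 Y2] rank_function_submodular[OF r2, of Y1 Y2]
    by auto
  ultimately show ?thesis
    using Y1 Y2 by linarith
qed

lemma rank_function_union_rank: "rank_function N (union_rank r1 r2)"
  unfolding rank_function_def
proof (intro conjI allI impI)
  show "finite N"
    using rank_function_finite[OF r1] .
  show "union_rank r1 r2 {} = 0"
    using union_rank_le[of "{}" "{}" r1 r2] rank_function_empty[OF r1] rank_function_empty[OF r2] by simp
qed (simp_all add: union_rank_mono union_rank_insert_le union_rank_submodular)

end

lemma card_union_indep_le:
  assumes r1: "rank_function N r1" and r2: "rank_function N r2" and "Y \<subseteq> N"
    and "A \<subseteq> N" "B \<subseteq> N" "r1 A = card A" "r2 B = card B"
  shows "card (A \<union> B) \<le> card ((A \<union> B) - Y) + r1 Y + r2 Y"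
proof -
  have fin: "finite A" "finite B" using assms rank_function_finite_subset[OF r1] by auto
  have "A \<union> B = ((A \<union> B) - Y) \<union> (A \<inter> Y) \<union> (B \<inter> Y)" by auto
  then have "card (A \<union> B) \<le> card ((A \<union> B) - Y \<union> (A \<inter> Y)) + card (B \<inter> Y)"
    using card_Un_le[of "(A \<union> B) - Y \<union> (A \<inter> Y)" "B \<inter> Y"] by simp
  then have "card (A \<union> B) \<le> card ((A \<union> B) - Y) + card (A \<inter> Y) + card (B \<inter> Y)"
    using card_Un_le[of "(A \<union> B) - Y" "A \<inter> Y"] by linarith
  moreover have "r1 (A \<inter> Y) = card (A \<inter> Y)" "r2 (B \<inter> Y) = card (B \<inter> Y)"
    using assms by (auto intro: rank_eq_card_subset[OF r1] rank_eq_card_subset[OF r2])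
  moreover have "r1 (A \<inter> Y) \<le> r1 Y" "r2 (B \<inter> Y) \<le> r2 Y"
    using assms by (auto intro: rank_function_mono[OF r1] rank_function_mono[OF r2])
  ultimately show ?thesis by linarith
qed

lemma union_rank_indep_iff:
  assumes r1: "rank_function N r1" and r2: "rank_function N r2" and I: "I \<subseteq> N"
  shows "union_rank r1 r2 I = card I \<longleftrightarrow>
    (\<exists>A B. A \<union> B = I \<and> r1 A = card A \<and> r2 B = card B)"
proof
  have fin: "finite I" using I rank_function_finite_subset[OF r1] by blast
  assume eq: "union_rank r1 r2 I = card I"
  obtain A B Y where AB: "A \<subseteq> I" "B \<subseteq> I" "Y \<subseteq> I" "r1 A = card A" "r2 B = card B"
      "card (I - Y) + r1 Y + r2 Y \<le> card (A \<union> B)"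
    using union_witness[OF fin rank_function_subset[OF r1 I] rank_function_subset[OF r2 I]] by blast
  have "card I \<le> card (A \<union> B)"
    using union_rank_le[OF fin AB(3), of r1 r2] AB(6) eq by linarith
  then have "A \<union> B = I"
    using AB fin by (meson Un_least card_seteq)
  then show "\<exists>A B. A \<union> B = I \<and> r1 A = card A \<and> r2 B = card B"
    using AB by blast
next
  have fin: "finite I" using I rank_function_finite_subset[OF r1] by blast
  assume "\<exists>A B. A \<union> B = I \<and> r1 A = card A \<and> r2 B = card B"
  then obtain A B where AB: "A \<union> B = I" "r1 A = card A" "r2 B = card B" by blast
  obtain Y where Y: "Y \<subseteq> I" "union_rank r1 r2 I = card (I - Y) + r1 Y + r2 Y"
    using union_rank_attained[OF fin] by blast
  have "card I \<le> union_rank r1 r2 I"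
    using card_union_indep_le[OF r1 r2, of Y A B] AB Y I by auto
  moreover have "union_rank r1 r2 I \<le> card I"
    using union_rank_le[OF fin, of "{}" r1 r2] rank_function_empty[OF r1] rank_function_empty[OF r2] by simp
  ultimately show "union_rank r1 r2 I = card I" by simp
qed

section \<open>The h-fold union\<close>

fun iter_union_rank :: "('a set \<Rightarrow> nat) \<Rightarrow> nat \<Rightarrow> 'a set \<Rightarrow> nat" where
  "iter_union_rank r 0 = (\<lambda>X. 0)"
| "iter_union_rank r (Suc h) = union_rank (iter_union_rank r h) r"

lemma rank_function_iter_union_rank:
  assumes "rank_function N r"
  shows "rank_function N (iter_union_rank r h)"
proof (induction h)
  case 0
  show ?case using rank_function_finite[OF assms] by (simp add: rank_function_def)
next
  case (Suc h)
  then show ?case using rank_function_union_rank[OF _ assms] by simp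
qed

lemma union_indep_0: "union_indep Ind 0 = {{}}"
  unfolding union_indep_def by auto

lemma union_indep_Suc:
  "X \<in> union_indep Ind (Suc h) \<longleftrightarrow> (\<exists>A B. A \<in> union_indep Ind h \<and> B \<in> Ind \<and> X = A \<union> B)"
proof
  assume "X \<in> union_indep Ind (Suc h)"
  then obtain F where F: "\<forall>i<Suc h. F i \<in> Ind" "X = (\<Union>i<Suc h. F i)"
    unfolding union_indep_def by blast
  have "(\<Union>i<h. F i) \<in> union_indep Ind h"
    unfolding union_indep_def using F(1) by (intro CollectI exI[of _ F]) auto
  moreover have "X = (\<Union>i<h. F i) \<union> F h"
    using F(2) by (auto simp: lessThan_Suc)
  ultimately show "\<exists>A B. A \<in> union_indep Ind h \<and> B \<in> Ind \<and> X = A \<union> B"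
    using F(1) by blast
next
  assume "\<exists>A B. A \<in> union_indep Ind h \<and> B \<in> Ind \<and> X = A \<union> B"
  then obtain F B where F: "\<forall>i<h. F i \<in> Ind" "B \<in> Ind" "X = (\<Union>i<h. F i) \<union> B"
    unfolding union_indep_def by blast
  then have "\<forall>i<Suc h. (F(h := B)) i \<in> Ind" "X = (\<Union>i<Suc h. (F(h := B)) i)"
    by (auto simp: lessThan_Suc)
  then show "X \<in> union_indep Ind (Suc h)"
    unfolding union_indep_def by blast
qed

lemma iter_union_rank_indep_iff:
  assumes r: "rank_function N r" and indep: "\<And>I. I \<subseteq> N \<Longrightarrow> I \<in> Ind \<longleftrightarrow> r I = card I"
    and I: "I \<subseteq> N"
  shows "I \<in> union_indep Ind h \<longleftrightarrow> iter_union_rank r h I = card I"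
  using I
proof (induction h arbitrary: I)
  case 0
  then show ?case using union_indep_0 rank_function_finite_subset[OF r] by auto
next
  case (Suc h)
  have "I \<in> union_indep Ind (Suc h) \<longleftrightarrow> (\<exists>A B. A \<in> union_indep Ind h \<and> B \<in> Ind \<and> I = A \<union> B)"
    by (rule union_indep_Suc)
  also have "\<dots> \<longleftrightarrow> (\<exists>A B. A \<union> B = I \<and> iter_union_rank r h A = card A \<and> r B = card B)"
    using Suc indep by (metis Un_upper1 Un_upper2 subset_trans)
  also have "\<dots> \<longleftrightarrow> iter_union_rank r (Suc h) I = card I"
    using union_rank_indep_iff[OF rank_function_iter_union_rank[OF r] r Suc.prems] by simp
  finally show ?case .
qed

lemma iter_union_rank_le:
  assumes r: "rank_function N r" and "X \<subseteq> N" "Y \<subseteq> X"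
  shows "iter_union_rank r h X \<le> card (X - Y) + h * r Y"
  using assms(2,3)
proof (induction h arbitrary: X)
  case 0
  then show ?case by simp
next
  case (Suc h)
  have "iter_union_rank r (Suc h) X \<le> card (X - Y) + iter_union_rank r h Y + r Y"
    using union_rank_le[OF rank_function_finite_subset[OF r Suc.prems(1)] Suc.prems(2)] by simp
  moreover have "iter_union_rank r h Y \<le> h * r Y"
    using Suc.IH[of Y] Suc.prems by auto
  ultimately show ?case by simp
qed

lemma iter_union_rank_attained:
  assumes r: "rank_function N r" and "X \<subseteq> N"
  shows "\<exists>Y\<subseteq>X. iter_union_rank r h X = card (X - Y) + h * r Y"
  using assms(2)
proof (induction h arbitrary: X)
  case 0
  then show ?case by auto
next
  case (Suc h)
  have fin: "finite X" using rank_function_finite_subset[OF r Suc.prems] .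
  obtain Y where Y: "Y \<subseteq> X" "iter_union_rank r (Suc h) X = card (X - Y) + iter_union_rank r h Y + r Y"
    using union_rank_attained[OF fin, of "iter_union_rank r h" r] by auto
  obtain Z where Z: "Z \<subseteq> Y" "iter_union_rank r h Y = card (Y - Z) + h * r Z"
    using Suc.IH[of Y] Y Suc.prems by auto
  have "r Z \<le> r Y"
    using Y Z Suc.prems by (intro rank_function_mono[OF r]) auto
  moreover have "card (X - Z) = card (X - Y) + card (Y - Z)"
  proof -
    have "card (X - Z) = card ((X - Y) \<union> (Y - Z))"
      using Y Z by (intro arg_cong[where f = card]) auto
    also have "\<dots> = card (X - Y) + card (Y - Z)"
      using fin finite_subset[OF Y(1) fin] by (intro card_Un_disjoint) auto
    finally show ?thesis .
  qed
  ultimately have "card (X - Z) + Suc h * r Z \<le> iter_union_rank r (Suc h) X"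
    using Y Z by simp
  moreover have "iter_union_rank r (Suc h) X \<le> card (X - Z) + Suc h * r Z"
    using Y Z Suc.prems by (intro iter_union_rank_le[OF r]) auto
  ultimately show ?case
    using Y Z by (intro exI[of _ Z]) auto
qed

section \<open>Matroid rank\<close>

context
  fixes N :: "'a set" and Ind :: "'a set set"
  assumes M: "matroid N Ind"
begin

lemma matroid_finite: "finite N"
  using M unfolding matroid_def by blast

lemma matroid_indep_subset: "X \<in> Ind \<Longrightarrow> X \<subseteq> N"
  using M unfolding matroid_def by blast

lemma matroid_indep_finite: "X \<in> Ind \<Longrightarrow> finite X"
  using matroid_finite matroid_indep_subset finite_subset by blast

lemma matroid_indep_antimono: "X \<in> Ind \<Longrightarrow> Y \<subseteq> X \<Longrightarrow> Y \<in> Ind"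
  using M unfolding matroid_def by blast

lemma finite_indep_cards: "finite {card X | X. X \<subseteq> A \<and> X \<in> Ind}"
proof -
  have "card X \<le> card N" if "X \<in> Ind" for X
    using card_mono[OF matroid_finite matroid_indep_subset[OF that]] .
  then have "{card X | X. X \<subseteq> A \<and> X \<in> Ind} \<subseteq> {..card N}"
    by auto
  then show ?thesis
    by (rule finite_subset) simp
qed

lemma card_le_mrank: "X \<subseteq> A \<Longrightarrow> X \<in> Ind \<Longrightarrow> card X \<le> mrank Ind A"
  unfolding mrank_def using finite_indep_cards by (intro Max_ge) auto

lemma mrank_attained: "\<exists>X\<subseteq>A. X \<in> Ind \<and> card X = mrank Ind A"
proof -
  have "{} \<in> Ind"
    using M unfolding matroid_def by blast
  then have "mrank Ind A \<in> {card X | X. X \<subseteq> A \<and> X \<in> Ind}"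
    unfolding mrank_def using finite_indep_cards by (intro Max_in) auto
  then show ?thesis by auto
qed

lemma indep_extend_mrank:
  "J \<in> Ind \<Longrightarrow> J \<subseteq> A \<Longrightarrow> \<exists>K. J \<subseteq> K \<and> K \<subseteq> A \<and> K \<in> Ind \<and> card K = mrank Ind A"
proof (induction "mrank Ind A - card J" arbitrary: J rule: less_induct)
  case less
  have le: "card J \<le> mrank Ind A"
    using card_le_mrank less.prems by blast
  show ?case
  proof (cases "card J = mrank Ind A")
    case True
    then show ?thesis using less.prems by blast
  next
    case False
    obtain L where L: "L \<subseteq> A" "L \<in> Ind" "card L = mrank Ind A"
      using mrank_attained by blast
    then obtain y where y: "y \<in> L - J" "insert y J \<in> Ind"
      using M le False less.prems(1) unfolding matroid_def by (metis le_neq_implies_less)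
    have "card (insert y J) = Suc (card J)"
      using y matroid_indep_finite less.prems by simp
    then have "mrank Ind A - card (insert y J) < mrank Ind A - card J"
      using le False by simp
    moreover have "insert y J \<subseteq> A"
      using y L less.prems by blast
    ultimately show ?thesis
      using less.hyps y(2) by (meson subset_insertI subset_trans)
  qed
qed

lemma mrank_mono: "A \<subseteq> B \<Longrightarrow> mrank Ind A \<le> mrank Ind B"
  using mrank_attained[of A] card_le_mrank[of _ B] by (metis subset_trans)

lemma mrank_insert_le: "mrank Ind (insert x A) \<le> Suc (mrank Ind A)"
proof -
  obtain X where X: "X \<subseteq> insert x A" "X \<in> Ind" "card X = mrank Ind (insert x A)"
    using mrank_attained by blast
  have "card (X - {x}) \<le> mrank Ind A"
    using X matroid_indep_antimono[OF X(2), of "X - {x}"] card_le_mrank[of "X - {x}" A] by auto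
  moreover have "card X \<le> Suc (card (X - {x}))"
    using matroid_indep_finite[OF X(2)] by (cases "x \<in> X") (auto simp: card_Suc_Diff1)
  ultimately show ?thesis
    using X(3) by simp
qed

lemma mrank_submodular: "mrank Ind (A \<union> B) + mrank Ind (A \<inter> B) \<le> mrank Ind A + mrank Ind B"
proof -
  obtain J where J: "J \<subseteq> A \<inter> B" "J \<in> Ind" "card J = mrank Ind (A \<inter> B)"
    using mrank_attained by blast
  then obtain K where K: "J \<subseteq> K" "K \<subseteq> A \<union> B" "K \<in> Ind" "card K = mrank Ind (A \<union> B)"
    using indep_extend_mrank[of J "A \<union> B"] by blast
  have fin: "finite K"
    using matroid_indep_finite[OF K(3)] .
  have "card (K \<inter> A) \<le> mrank Ind A" "card (K \<inter> B) \<le> mrank Ind B"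
    using matroid_indep_antimono[OF K(3)] card_le_mrank by auto
  moreover have "(K \<inter> A) \<union> (K \<inter> B) = K"
    using K(2) by auto
  then have "card (K \<inter> A) + card (K \<inter> B) = card K + card ((K \<inter> A) \<inter> (K \<inter> B))"
    using card_Un_Int[of "K \<inter> A" "K \<inter> B"] fin by simp
  moreover have "card J \<le> card ((K \<inter> A) \<inter> (K \<inter> B))"
    using J K fin by (intro card_mono) auto
  ultimately show ?thesis
    using J(3) K(4) by linarith
qed

lemma rank_function_mrank: "rank_function N (mrank Ind)"
  unfolding rank_function_def
  using matroid_finite mrank_attained[of "{}"] mrank_mono mrank_insert_le mrank_submodular
  by auto

lemma indep_iff_mrank_eq_card: "I \<subseteq> N \<Longrightarrow> I \<in> Ind \<longleftrightarrow> mrank Ind I = card I"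
proof
  assume "I \<subseteq> N" "I \<in> Ind"
  then show "mrank Ind I = card I"
    using rank_le_card[OF rank_function_mrank] card_le_mrank[of I I] by (simp add: le_antisym)
next
  assume I: "I \<subseteq> N" "mrank Ind I = card I"
  obtain X where X: "X \<subseteq> I" "X \<in> Ind" "card X = mrank Ind I"
    using mrank_attained by blast
  have "finite I"
    using I rank_function_finite_subset[OF rank_function_mrank] by blast
  then show "I \<in> Ind"
    using X I card_subset_eq by metis
qed

end

lemma mrank_eq_rank_function:
  assumes r: "rank_function N r" and indep: "\<And>I. I \<subseteq> N \<Longrightarrow> I \<in> Ind \<longleftrightarrow> r I = card I"
    and X: "X \<subseteq> N"
  shows "mrank Ind X = r X"
  unfolding mrank_def
proof (rule Max_eqI)
  show "finite {card J | J. J \<subseteq> X \<and> J \<in> Ind}"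
    using rank_function_finite_subset[OF r X] by simp
next
  fix n assume "n \<in> {card J | J. J \<subseteq> X \<and> J \<in> Ind}"
  then obtain J where "J \<subseteq> X" "J \<in> Ind" "n = card J" by blast
  then show "n \<le> r X"
    using X indep[of J] rank_function_mono[OF r, of J X] by auto
next
  obtain J where "J \<subseteq> X" "r J = card J" "r J = r X"
    using rank_function_basis[OF r X] by blast
  then show "r X \<in> {card J | J. J \<subseteq> X \<and> J \<in> Ind}"
    using X indep[of J] by force
qed

lemma mrank_union_indep:
  assumes "matroid N Ind" "X \<subseteq> N"
  shows "mrank (union_indep Ind h) X = iter_union_rank (mrank Ind) h X"
proof -
  have r: "rank_function N (mrank Ind)"
    using rank_function_mrank[OF assms(1)] .
  have "I \<in> union_indep Ind h \<longleftrightarrow> iter_union_rank (mrank Ind) h I = card I" if "I \<subseteq> N" for I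
    using iter_union_rank_indep_iff[OF r indep_iff_mrank_eq_card[OF assms(1)] that] .
  then show ?thesis
    using mrank_eq_rank_function[OF rank_function_iter_union_rank[OF r] _ assms(2)] by blast
qed

section \<open>The sets D(Q, \<lambda>)\<close>

lemma Dval_supermodular:
  assumes r: "rank_function N (mrank Ind)" and "U \<subseteq> N" "V \<subseteq> N" "0 \<le> lam"
  shows "Dval Ind lam U + Dval Ind lam V \<le> Dval Ind lam (U \<union> V) + Dval Ind lam (U \<inter> V)"
proof -
  have fin: "finite U" "finite V"
    using assms rank_function_finite_subset[OF r] by auto
  have "card (U \<union> V) + card (U \<inter> V) = card U + card V"
    using card_Un_Int[OF fin] by simp
  moreover have "real (mrank Ind (U \<union> V)) + real (mrank Ind (U \<inter> V)) \<le> real (mrank Ind U) + real (mrank Ind V)"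
    using rank_function_submodular[OF r assms(2,3)] by linarith
  then have "lam * (real (mrank Ind (U \<union> V)) + real (mrank Ind (U \<inter> V)))
      \<le> lam * (real (mrank Ind U) + real (mrank Ind V))"
    using assms(4) by (rule mult_left_mono)
  then have "lam * real (mrank Ind (U \<union> V)) + lam * real (mrank Ind (U \<inter> V))
      \<le> lam * real (mrank Ind U) + lam * real (mrank Ind V)"
    by (simp only: distrib_left)
  ultimately show ?thesis
    unfolding Dval_def by linarith
qed

lemma is_Dmaximizer_Un:
  assumes r: "rank_function N (mrank Ind)" and Q: "Q \<subseteq> N" and lam: "0 \<le> lam"
    and U: "is_Dmaximizer Ind Q lam U" and V: "is_Dmaximizer Ind Q lam V"
  shows "is_Dmaximizer Ind Q lam (U \<union> V)"
proof -
  have sub: "U \<subseteq> Q" "V \<subseteq> Q" "U \<inter> V \<subseteq> Q"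
    using U V unfolding is_Dmaximizer_def by auto
  have "Dval Ind lam U + Dval Ind lam V \<le> Dval Ind lam (U \<union> V) + Dval Ind lam (U \<inter> V)"
    using sub Q lam by (intro Dval_supermodular[OF r]) auto
  moreover have "Dval Ind lam (U \<inter> V) \<le> Dval Ind lam V"
    using V sub unfolding is_Dmaximizer_def by blast
  ultimately have "Dval Ind lam U \<le> Dval Ind lam (U \<union> V)" by linarith
  then show ?thesis
    using U sub unfolding is_Dmaximizer_def by (auto intro: order_trans)
qed

lemma Dset_greatest:
  assumes r: "rank_function N (mrank Ind)" and Q: "Q \<subseteq> N" and lam: "0 \<le> lam"
    and Z: "is_Dmaximizer Ind Q lam Z"
  shows "Z \<subseteq> Dset Ind Q lam" and "Dset Ind Q lam \<subseteq> Q"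
proof -
  have fin: "finite Q"
    using rank_function_finite_subset[OF r Q] .
  let ?M = "{U. is_Dmaximizer Ind Q lam U}"
  have "card ` ?M \<subseteq> {..card Q}"
    using fin card_mono unfolding is_Dmaximizer_def by fastforce
  then have "Max (card ` ?M) \<in> card ` ?M"
    using Z by (intro Max_in) (auto intro: finite_subset)
  then obtain D where D: "is_Dmaximizer Ind Q lam D" "card D = Max (card ` ?M)"
    by auto
  have greatest: "U \<subseteq> D" if U: "is_Dmaximizer Ind Q lam U" for U
  proof -
    have UD: "is_Dmaximizer Ind Q lam (U \<union> D)"
      using is_Dmaximizer_Un[OF r Q lam U D(1)] .
    then have "card (U \<union> D) \<le> card D"
      using D(2) \<open>card ` ?M \<subseteq> {..card Q}\<close> by (auto intro: Max_ge finite_subset)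
    moreover have "finite (U \<union> D)"
      using UD fin finite_subset unfolding is_Dmaximizer_def by blast
    ultimately show "U \<subseteq> D"
      using card_seteq[of "U \<union> D" D] by blast
  qed
  have "Dset Ind Q lam = D"
    unfolding Dset_def using D(1) greatest by (intro the_equality) blast+
  then show "Z \<subseteq> Dset Ind Q lam" "Dset Ind Q lam \<subseteq> Q"
    using greatest[OF Z] D(1) unfolding is_Dmaximizer_def by auto
qed

lemma is_Dmaximizer_of_minimizer:
  assumes fin: "finite Q" and Z: "Z \<subseteq> Q"
    and min: "\<And>V. V \<subseteq> Q \<Longrightarrow> card (Q - Z) + h * mrank Ind Z \<le> card (Q - V) + h * mrank Ind V"
  shows "is_Dmaximizer Ind Q (real h) Z"
  unfolding is_Dmaximizer_def
proof (intro conjI allI impI)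
  show "Z \<subseteq> Q" by fact
  fix V assume V: "V \<subseteq> Q"
  have "card (Q - Z) = card Q - card Z" "card (Q - V) = card Q - card V"
    using fin Z V by (auto intro: card_Diff_subset finite_subset)
  moreover have "card Z \<le> card Q" "card V \<le> card Q"
    using fin Z V by (auto intro: card_mono)
  ultimately have "card V + h * mrank Ind Z \<le> card Z + h * mrank Ind V"
    using min[OF V] by linarith
  then have "real (card V) + real h * real (mrank Ind Z) \<le> real (card Z) + real h * real (mrank Ind V)"
    by (metis of_nat_add of_nat_le_iff of_nat_mult)
  then show "Dval Ind (real h) V \<le> Dval Ind (real h) Z"
    unfolding Dval_def by simp
qed

lemma rank_insert_eq_mono:
  assumes r: "rank_function N r" and "Z \<subseteq> D" "D \<subseteq> N" "e \<in> N"
    and Z: "r (insert e Z) = r Z"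
  shows "r (insert e D) = r D"
proof -
  have "insert e Z \<union> D = insert e D"
    using assms by auto
  moreover have "r (insert e Z \<union> D) + r (insert e Z \<inter> D) \<le> r (insert e Z) + r D"
    using assms by (intro rank_function_submodular[OF r]) auto
  ultimately have "r (insert e D) + r (insert e Z \<inter> D) \<le> r (insert e Z) + r D"
    by simp
  moreover have "r Z \<le> r (insert e Z \<inter> D)" "r D \<le> r (insert e D)"
    using assms by (auto intro: rank_function_mono[OF r])
  ultimately show ?thesis
    using Z by linarith
qed

lemma iter_union_rank_stable_minimizer:
  assumes r: "rank_function N r" and h: "0 < h" and Q: "Q \<subseteq> N" and e: "e \<in> N - Q"
    and stable: "iter_union_rank r h (insert e Q) = iter_union_rank r h Q"
  shows "\<exists>Z\<subseteq>Q. iter_union_rank r h Q = card (Q - Z) + h * r Z \<and> r (insert e Z) = r Z"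
proof -
  have fin: "finite Q"
    using rank_function_finite_subset[OF r Q] .
  have "insert e Q \<subseteq> N"
    using Q e by auto
  then obtain Y where Y: "Y \<subseteq> insert e Q" "iter_union_rank r h (insert e Q) = card (insert e Q - Y) + h * r Y"
    using iter_union_rank_attained[OF r, of "insert e Q" h] by blast
  have "e \<in> Y"
  proof (rule ccontr)
    assume "e \<notin> Y"
    then have "Y \<subseteq> Q" "insert e Q - Y = insert e (Q - Y)"
      using Y(1) by auto
    moreover have "card (insert e (Q - Y)) = Suc (card (Q - Y))"
      using e fin by simp
    ultimately show False
      using Y(2) stable iter_union_rank_le[OF r Q, of Y h] by simp
  qed
  define Z where "Z = Y - {e}"
  have Z: "Z \<subseteq> Q" "Y = insert e Z" "insert e Q - Y = Q - Z"
    using Y(1) e \<open>e \<in> Y\<close> unfolding Z_def by auto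
  have eq: "iter_union_rank r h Q = card (Q - Z) + h * r Y"
    using Y(2) stable Z(3) by simp
  have "r Z \<le> r Y"
    using Z(2) Y(1) Q e rank_function_mono[OF r, of Z Y] by auto
  moreover have "h * r Y \<le> h * r Z"
    using eq iter_union_rank_le[OF r Q Z(1), of h] by linarith
  then have "r Y \<le> r Z"
    using h by simp
  ultimately have "r Y = r Z"
    by simp
  then show ?thesis
    using eq Z(1,2) by auto
qed

theorem lemmaA1:
  fixes N :: "'a set" and Ind :: "'a set set" and h :: nat and Q :: "'a set" and e :: 'a
  assumes "matroid N Ind"
    and "h \<ge> 1"
    and "Q \<subseteq> N"
    and "e \<in> N - Q"
    and "mrank (union_indep Ind h) (Q \<union> {e}) = mrank (union_indep Ind h) Q"
  shows "e \<in> mspan N Ind (Dset Ind Q (real h))"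
proof -
  have r: "rank_function N (mrank Ind)"
    using rank_function_mrank[OF assms(1)] .
  have "iter_union_rank (mrank Ind) h (insert e Q) = iter_union_rank (mrank Ind) h Q"
    using assms(5) mrank_union_indep[OF assms(1)] assms(3,4) by simp
  moreover have "0 < h"
    using assms(2) by simp
  ultimately obtain Z where Z: "Z \<subseteq> Q" "iter_union_rank (mrank Ind) h Q = card (Q - Z) + h * mrank Ind Z"
    "mrank Ind (insert e Z) = mrank Ind Z"
    using iter_union_rank_stable_minimizer[OF r _ assms(3,4)] by blast
  have "is_Dmaximizer Ind Q (real h) Z"
  proof (rule is_Dmaximizer_of_minimizer[OF rank_function_finite_subset[OF r assms(3)] Z(1)])
    fix V assume "V \<subseteq> Q"
    then show "card (Q - Z) + h * mrank Ind Z \<le> card (Q - V) + h * mrank Ind V"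
      using Z(2) iter_union_rank_le[OF r assms(3) \<open>V \<subseteq> Q\<close>, of h] by simp
  qed
  then have "Z \<subseteq> Dset Ind Q (real h)" "Dset Ind Q (real h) \<subseteq> Q"
    using Dset_greatest[OF r assms(3)] by auto
  then have "mrank Ind (insert e (Dset Ind Q (real h))) = mrank Ind (Dset Ind Q (real h))"
    using rank_insert_eq_mono[OF r _ _ _ Z(3)] assms(3,4) by blast
  then show ?thesis
    unfolding mspan_def using assms(4) by simp
qed

end
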